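(* For every integer $m\geqslant 1$, the first order binary Reed–Muller code $\mathcal R(1,m)$ is log-concave.
   Context: The binary Reed–Muller code $\mathcal R(1,m)$ is the binary linear code of length $2^m$ consisting of the evaluation vectors $(f(x))_{x\in\mathbb{F}_2^m}$ of all polynomials $f\in\mathbb{F}_2[x_1,\dots,x_m]$ of degree at most $1$. For a linear code of length $n$, $A_i$ is the number of codewords of weight $i$; the nonzero weight distribution is the subsequence $a_0,\dots,a_N$ of $A_0,\dots,A_n$ of its nonzero values, in order; the code is log-concave if $a_i^2\geqslant a_{i-1}a_{i+1}$ for all $1\leqslant i\leqslant N-1$. *)

theory Defs
  imports Main "HOL-Library.FuncSet"
begin

text \<open>Points of F_2^m: boolean vectors indexed by 0..m-1 (zero outside).\<close>
definition F2_space :: "nat \<Rightarrow> (nat \<Rightarrow> bool) set" where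
  "F2_space m = {x. \<forall>i. m \<le> i \<longrightarrow> \<not> x i}"

text \<open>A binary word of length card I is a function I -> F_2 (bool), extensional outside I.
  Hamming weight, weight distribution A_i, nonzero weight distribution, log-concavity.\<close>
definition hweight :: "'a set \<Rightarrow> ('a \<Rightarrow> bool) \<Rightarrow> nat" where
  "hweight I v = card {x \<in> I. v x}"

definition weight_count :: "('a \<Rightarrow> bool) set \<Rightarrow> 'a set \<Rightarrow> nat \<Rightarrow> nat" where
  "weight_count C I i = card {v \<in> C. hweight I v = i}"

definition nonzero_weight_distribution :: "('a \<Rightarrow> bool) set \<Rightarrow> 'a set \<Rightarrow> nat list" where
  "nonzero_weight_distribution C I =
     filter (\<lambda>a. a \<noteq> 0) (map (weight_count C I) [0..<card I + 1])"

definition log_concave_code :: "('a \<Rightarrow> bool) set \<Rightarrow> 'a set \<Rightarrow> bool" where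
  "log_concave_code C I =
     (let a = nonzero_weight_distribution C I in
      \<forall>i. 1 \<le> i \<and> i + 1 < length a \<longrightarrow> a ! (i - 1) * a ! (i + 1) \<le> (a ! i)^2)"

text \<open>R(1,m): evaluation vectors over F_2^m of f(x) = c + sum_i a_i x_i (degree <= 1).
  The sum in F_2 is the parity of the number of i < m with a_i = x_i = 1.\<close>
definition RM1 :: "nat \<Rightarrow> ((nat \<Rightarrow> bool) \<Rightarrow> bool) set" where
  "RM1 m = {restrict (\<lambda>x. c \<noteq> odd (card {i \<in> {..<m}. a i \<and> x i})) (F2_space m)
            | (a :: nat \<Rightarrow> bool) (c :: bool). True}"

end

theory Submission
  imports Defs
begin

text \<open>A codeword of \<open>R(1,m)\<close> is either constant or the evaluation of an affine form
  \<open>c + \<Sum> a\<^sub>i x\<^sub>i\<close> with some \<open>a\<^sub>j = 1\<close>. In the latter case flipping the coordinate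
  \<open>x\<^sub>j\<close> is an involution of \<open>F\<^sub>2\<^sup>m\<close> that negates the form, so the form is 1 at exactly
  half of the points. Hence the only weights are \<open>0\<close>, \<open>2^(m-1)\<close> and \<open>2^m\<close>, attained
  by \<open>1\<close>, \<open>A > 0\<close> and \<open>1\<close> codewords respectively, and the single log-concavity
  condition reads \<open>1 * 1 \<le> A^2\<close>.\<close>

lemma card_eq_half_if_involution_negates:
  assumes "finite S"
    and "\<And>x. x \<in> S \<Longrightarrow> \<sigma> x \<in> S" "\<And>x. x \<in> S \<Longrightarrow> \<sigma> (\<sigma> x) = x"
    and "\<And>x. x \<in> S \<Longrightarrow> P (\<sigma> x) \<longleftrightarrow> \<not> P x"
  shows "2 * card {x \<in> S. P x} = card S"
proof -
  have "bij_betw \<sigma> {x \<in> S. P x} {x \<in> S. \<not> P x}"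
    by (rule bij_betw_byWitness[where f' = \<sigma>]) (use assms in auto)
  then have "card {x \<in> S. P x} = card {x \<in> S. \<not> P x}"
    by (rule bij_betw_same_card)
  moreover have "card {x \<in> S. P x} + card {x \<in> S. \<not> P x} = card S"
    using assms(1) by (subst card_Un_disjoint[symmetric]) (auto intro: arg_cong[where f = card])
  ultimately show ?thesis
    by simp
qed

lemma filter_upt_three_point_support:
  assumes "0 < h" "h < n" "\<And>i. P i \<Longrightarrow> i \<in> {0, h, n}"
  shows "filter P [0..<n + 1] = filter P [0, h, n]"
proof (rule sorted_distinct_set_unique)
  show "sorted (filter P [0..<n + 1])"
    using sorted_upt by (rule sorted_wrt_filter)
  show "distinct (filter P [0..<n + 1])"
    by (intro distinct_filter distinct_upt)
  show "sorted (filter P [0, h, n])" "distinct (filter P [0, h, n])"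
    using assms(1,2) by auto
  show "set (filter P [0..<n + 1]) = set (filter P [0, h, n])"
    using assms by (auto simp: less_Suc_eq_le)
qed

lemma nonzero_weight_distribution_three_weights:
  assumes "0 < h" "h < card I"
    and "\<And>w. weight_count C I w \<noteq> 0 \<Longrightarrow> w \<in> {0, h, card I}"
  shows "nonzero_weight_distribution C I =
    filter (\<lambda>a. a \<noteq> 0) [weight_count C I 0, weight_count C I h, weight_count C I (card I)]"
proof -
  have support: "filter ((\<lambda>a. a \<noteq> 0) \<circ> weight_count C I) [0..<card I + 1] =
      filter ((\<lambda>a. a \<noteq> 0) \<circ> weight_count C I) [0, h, card I]"
    by (rule filter_upt_three_point_support) (use assms in auto)
  show ?thesis
    unfolding nonzero_weight_distribution_def filter_map support by simp
qed

lemma log_concave_code_three_weights: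
  assumes "0 < h" "h < card I"
    and "\<And>w. weight_count C I w \<noteq> 0 \<Longrightarrow> w \<in> {0, h, card I}"
    and "weight_count C I 0 * weight_count C I (card I) \<le> (weight_count C I h)\<^sup>2"
  shows "log_concave_code C I"
proof -
  let ?A = "weight_count C I"
  have "nonzero_weight_distribution C I = filter (\<lambda>a. a \<noteq> 0) [?A 0, ?A h, ?A (card I)]"
    using assms(1-3) by (rule nonzero_weight_distribution_three_weights)
  \<comment> \<open>if one of the three counts vanishes, the distribution is too short for any condition\<close>
  then show ?thesis
    using assms(4) unfolding log_concave_code_def Let_def
    by (cases "?A 0 = 0"; cases "?A h = 0"; cases "?A (card I) = 0") auto
qed

lemma hweight_restrict: "hweight I (restrict f I) = card {x \<in> I. f x}"
  unfolding hweight_def by (rule arg_cong[where f = card]) auto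

lemma F2_space_eq_image_Pow: "F2_space m = (\<lambda>S i. i \<in> S) ` Pow {..<m}"
proof
  show "F2_space m \<subseteq> (\<lambda>S i. i \<in> S) ` Pow {..<m}"
  proof
    fix x
    assume "x \<in> F2_space m"
    then have "Collect x \<in> Pow {..<m}"
      by (auto simp: F2_space_def simp flip: not_less)
    then show "x \<in> (\<lambda>S i. i \<in> S) ` Pow {..<m}"
      by (rule rev_image_eqI) simp
  qed
  show "(\<lambda>S i. i \<in> S) ` Pow {..<m} \<subseteq> F2_space m"
    by (auto simp: F2_space_def)
qed

lemma finite_F2_space: "finite (F2_space m)"
  by (simp add: F2_space_eq_image_Pow)

lemma card_F2_space: "card (F2_space m) = 2 ^ m"
proof -
  have "inj_on (\<lambda>S i. i \<in> S) (Pow {..<m})"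
    by (simp add: inj_on_def fun_eq_iff set_eq_iff)
  then show ?thesis
    by (simp add: F2_space_eq_image_Pow card_image card_Pow)
qed

definition affine_form :: "nat \<Rightarrow> (nat \<Rightarrow> bool) \<Rightarrow> bool \<Rightarrow> (nat \<Rightarrow> bool) \<Rightarrow> bool" where
  "affine_form m a c x \<longleftrightarrow> c \<noteq> odd (card {i \<in> {..<m}. a i \<and> x i})"

lemma RM1_eq_affine_forms:
  "RM1 m = {restrict (affine_form m a c) (F2_space m) | a c. True}"
  unfolding RM1_def affine_form_def ..

lemma affine_form_flip:
  assumes "j < m" "a j"
  shows "affine_form m a c (x(j := \<not> x j)) \<longleftrightarrow> \<not> affine_form m a c x"
proof -
  let ?S = "{i \<in> {..<m}. a i \<and> x i}"
  let ?S' = "{i \<in> {..<m}. a i \<and> (x(j := \<not> x j)) i}"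
  have fin: "finite ?S"
    by simp
  have "card ?S = Suc (card ?S')" if "x j"
  proof -
    have S': "?S' = ?S - {j}" and "j \<in> ?S"
      using assms that by auto
    show ?thesis
      unfolding S' using card_Suc_Diff1[OF fin \<open>j \<in> ?S\<close>] by (rule sym)
  qed
  moreover have "card ?S' = Suc (card ?S)" if "\<not> x j"
  proof -
    have S': "?S' = insert j ?S" and "j \<notin> ?S"
      using assms that by auto
    show ?thesis
      unfolding S' using card_insert_disjoint[OF fin \<open>j \<notin> ?S\<close>] .
  qed
  ultimately show ?thesis
    unfolding affine_form_def by (cases "x j") simp_all
qed

lemma affine_form_const:
  assumes "\<And>j. j < m \<Longrightarrow> \<not> a j"
  shows "affine_form m a c = (\<lambda>_. c)"
proof
  fix x
  have no_terms: "{i \<in> {..<m}. a i \<and> x i} = {}"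
    using assms by auto
  show "affine_form m a c x = c"
    unfolding affine_form_def no_terms by simp
qed

lemma fun_upd_in_F2_space: "j < m \<Longrightarrow> x \<in> F2_space m \<Longrightarrow> x(j := b) \<in> F2_space m"
  by (simp add: F2_space_def)

lemma hweight_affine_form_nonconst:
  assumes "j < m" "a j"
  shows "2 * hweight (F2_space m) (restrict (affine_form m a c) (F2_space m)) = 2 ^ m"
proof -
  let ?flip = "\<lambda>x. x(j := \<not> x j)"
  have "2 * card {x \<in> F2_space m. affine_form m a c x} = card (F2_space m)"
    by (rule card_eq_half_if_involution_negates[where \<sigma> = ?flip])
      (use assms in \<open>auto simp: finite_F2_space affine_form_flip fun_upd_in_F2_space\<close>)
  then show ?thesis
    by (simp add: hweight_restrict card_F2_space)
qed

lemma hweight_const: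
  "hweight (F2_space m) (restrict (\<lambda>_. c) (F2_space m)) = (if c then 2 ^ m else 0)"
  by (simp add: hweight_restrict card_F2_space)

lemma const_in_RM1: "restrict (\<lambda>_. c) (F2_space m) \<in> RM1 m"
  unfolding RM1_eq_affine_forms
  by (auto intro!: exI[of _ "\<lambda>_. False"] exI[of _ c] simp: affine_form_const)

lemma RM1_cases:
  assumes "v \<in> RM1 m"
  obtains c where "v = restrict (\<lambda>_. c) (F2_space m)"
  | "2 * hweight (F2_space m) v = 2 ^ m"
proof -
  obtain a c where v: "v = restrict (affine_form m a c) (F2_space m)"
    using assms unfolding RM1_eq_affine_forms by auto
  show thesis
  proof (cases "\<exists>j<m. a j")
    case True
    then show ?thesis
      using that(2) v hweight_affine_form_nonconst by blast
  next
    case False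
    then show ?thesis
      using that(1) v affine_form_const by metis
  qed
qed

lemma finite_RM1: "finite (RM1 m)"
proof (rule finite_subset)
  show "RM1 m \<subseteq> PiE (F2_space m) (\<lambda>_. UNIV)"
    unfolding RM1_def by auto
  show "finite (PiE (F2_space m) (\<lambda>_. UNIV :: bool set))"
    by (simp add: finite_PiE finite_F2_space)
qed

lemma weight_count_RM1_const:
  "weight_count (RM1 m) (F2_space m) (if c then 2 ^ m else 0) = 1"
proof -
  let ?w = "if c then 2 ^ m else 0 :: nat"
  have "v = restrict (\<lambda>_. c) (F2_space m)"
    if "v \<in> RM1 m" "hweight (F2_space m) v = ?w" for v
    using that(1)
  proof (cases rule: RM1_cases)
    case (1 c')
    then show ?thesis
      using that(2) by (simp add: hweight_const split: if_splits)
  next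
    case 2
    then show ?thesis
      using that(2) by (simp split: if_splits)
  qed
  then have "{v \<in> RM1 m. hweight (F2_space m) v = ?w} = {restrict (\<lambda>_. c) (F2_space m)}"
    using const_in_RM1 hweight_const by auto
  then show ?thesis
    by (simp add: weight_count_def)
qed

lemma weight_count_RM1_nonzero_cases:
  assumes "weight_count (RM1 m) (F2_space m) w \<noteq> 0"
  shows "w = 0 \<or> w = 2 ^ m \<or> 2 * w = 2 ^ m"
proof -
  have "{v \<in> RM1 m. hweight (F2_space m) v = w} \<noteq> {}"
    using assms by (metis card.empty weight_count_def)
  then obtain v where "v \<in> RM1 m" and w: "hweight (F2_space m) v = w"
    by blast
  then show ?thesis
    by (cases rule: RM1_cases) (auto simp: hweight_const split: if_splits)
qed

lemma weight_count_RM1_half_nonzero: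
  assumes "1 \<le> m"
  shows "weight_count (RM1 m) (F2_space m) (2 ^ (m - 1)) \<noteq> 0"
proof -
  let ?v = "restrict (affine_form m (\<lambda>i. i = 0) False) (F2_space m)"
  have "?v \<in> RM1 m"
    unfolding RM1_eq_affine_forms by blast
  moreover have "2 * hweight (F2_space m) ?v = 2 ^ m"
    by (rule hweight_affine_form_nonconst[of 0]) (use assms in auto)
  then have "hweight (F2_space m) ?v = 2 ^ (m - 1)"
    using assms by (cases m) auto
  ultimately show ?thesis
    unfolding weight_count_def using finite_RM1 by (auto simp: card_eq_0_iff)
qed

theorem mainTheorem12:
  fixes m :: nat
  assumes "1 \<le> m"
  shows "log_concave_code (RM1 m) (F2_space m)"
proof (rule log_concave_code_three_weights[where h = "2 ^ (m - 1)"])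
  let ?A = "weight_count (RM1 m) (F2_space m)"
  have n: "card (F2_space m) = 2 * 2 ^ (m - 1)"
    using assms by (cases m) (auto simp: card_F2_space)
  show "0 < (2::nat) ^ (m - 1)" and "2 ^ (m - 1) < card (F2_space m)"
    using n by simp_all
  show "w \<in> {0, 2 ^ (m - 1), card (F2_space m)}" if "?A w \<noteq> 0" for w
    using weight_count_RM1_nonzero_cases[OF that] n card_F2_space[of m] by auto
  have "?A 0 = 1" and "?A (card (F2_space m)) = 1"
    using weight_count_RM1_const[of m False] weight_count_RM1_const[of m True]
    by (simp_all add: card_F2_space)
  then show "?A 0 * ?A (card (F2_space m)) \<le> (?A (2 ^ (m - 1)))\<^sup>2"
    using weight_count_RM1_half_nonzero[OF assms] by (simp add: Suc_le_eq)
qed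

end
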